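(* Consider $n$ agents indexed by $\mathcal{V}=\{1,\dots,n\}$ over a fixed directed strongly connected graph with nonnegative weights $a_{ij}$ ($a_{ij}>0$ iff $j\in N_i$) and Laplacian $L$. Assume the CFP solution set $\mathbf{X}^*$ is non-empty and that there is $K\ge0$ with $\|\nabla g_i^+(x)\|\le K$ for all $x$ and all $i$. Let $\{\alpha(t)\},\{\beta(t)\}$ be sequences with (a) $\alpha(t)\in[0,1]$, $\sum_{t=0}^\infty\alpha(t)=\infty$, $\sum_{t=0}^\infty\alpha^2(t)<\infty$; (b) $\beta(t)\ge0$, $\sum_{t=0}^\infty\beta(t)=\infty$, $\sum_{t=0}^\infty\beta^2(t)<\infty$. Let $0<h<\varrho$, where $$\varrho=\min\Big[\frac{1}{\max_{1\le i\le n}\sum_{j=1}^n a_{ij}},\ \min_{2\le i\le n}\frac{2\,\mathrm{Re}(\lambda_i(L))}{|\lambda_i(L)|^2}\Big].$$ The agents' states $x_i(t)\in\mathbb{R}^m$ evolve by $x_i(t+1)=x_i(t)+u_i(t)$, $t=0,1,2,\dots$, with $$y_i(t)=x_i(t)+h\sum_{j\in N_i}a_{ij}(x_j(t)-x_i(t)),\quad \nabla_i(t)=\beta(t)\nabla g_i^+(y_i(t)),\quad \xi_i(t)=y_i(t)-\nabla_i(t),$$ $$\varphi_i(t)=\alpha(t)\big(\xi_i(t)-P_{X_i}(\xi_i(t))\big),\quad \phi_i(t)=-\nabla_i(t)-\varphi_i(t),\quad u_i(t)=h\sum_{j\in N_i}a_{ij}(x_j(t)-x_i(t))+\phi_i(t).$$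 Then the agents reach consensus asymptotically and there is $x^*\in\mathbf{X}^*$ with $\lim_{t\to\infty}x_i(t)=x^*$ for all $i$.
   Context: For each $i$, $g_i:\mathbb{R}^m\to\mathbb{R}$ is convex and continuous, $X_i\subset\mathbb{R}^m$ closed convex, $X=\bigcap_i X_i$; the CFP asks for $x$ with $g_i(x)\le0$ for all $i$ and $x\in X$, with solution set $\mathbf{X}^*$. $g_i^+=\max[g_i,0]$; $\nabla g_i^+(y)$ denotes a subgradient of $g_i^+$ at $y$ (chosen as $0$ if $g_i(y)\le 0$ and as a subgradient of $g_i$ otherwise); $P_{X_i}$ is Euclidean projection onto $X_i$. The Laplacian $L=(l_{ij})$ has $l_{ij}=-a_{ij}$ for $i\ne j$ and $l_{ii}=\sum_j a_{ij}$; since the graph has a spanning tree, $L$ has a simple eigenvalue $\lambda_1(L)=0$ and its other eigenvalues $\lambda_2(L),\dots,\lambda_n(L)$ have positive real parts. Consensus means $\|x_i(t)-x_j(t)\|\to0$ for all $i,j$. *)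

theory Defs
  imports "HOL-Analysis.Analysis"
begin

definition neighbours :: "('n \<Rightarrow> 'n \<Rightarrow> real) \<Rightarrow> 'n \<Rightarrow> 'n set" where
  "neighbours a i = {j. a i j > 0}"

text \<open>Directed graph: edge j \<rightarrow> i iff j \<in> N_i. Strongly connected: every node reaches every node.\<close>
definition strongly_connected :: "('n \<Rightarrow> 'n \<Rightarrow> real) \<Rightarrow> bool" where
  "strongly_connected a \<longleftrightarrow> (\<forall>i j. (i, j) \<in> {(u, v). a v u > 0}\<^sup>*)"

definition laplacian :: "('n::finite \<Rightarrow> 'n \<Rightarrow> real) \<Rightarrow> real^'n^'n" where
  "laplacian a = (\<chi> i j. if i = j then (\<Sum>k\<in>UNIV. a i k) else - a i j)"

definition is_eigenvalue :: "real^'n^'n \<Rightarrow> complex \<Rightarrow> bool" where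
  "is_eigenvalue M lam \<longleftrightarrow> (\<exists>v :: complex^'n. v \<noteq> 0 \<and> map_matrix complex_of_real M *v v = lam *s v)"

text \<open>The bound \<rho>. Since 0 is a simple eigenvalue of L, \<lambda>_2,...,\<lambda>_n are exactly the
  nonzero eigenvalues, so the inner minimum ranges over the nonzero eigenvalues.\<close>
definition rho :: "('n::finite \<Rightarrow> 'n \<Rightarrow> real) \<Rightarrow> real" where
  "rho a = min (1 / Max (range (\<lambda>i. \<Sum>j\<in>UNIV. a i j)))
     (Min {2 * Re lam / (cmod lam)\<^sup>2 | lam. is_eigenvalue (laplacian a) lam \<and> lam \<noteq> 0})"

definition cfp_solutions :: "('n \<Rightarrow> 'v \<Rightarrow> real) \<Rightarrow> ('n \<Rightarrow> 'v set) \<Rightarrow> 'v set" where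
  "cfp_solutions g X = {x. (\<forall>i. g i x \<le> 0) \<and> x \<in> (\<Inter>i. X i)}"

text \<open>dg is a valid choice of \<nabla>g^+: 0 where g \<le> 0, a subgradient of g elsewhere.\<close>
definition plus_subgrad_choice :: "('v::real_inner \<Rightarrow> real) \<Rightarrow> ('v \<Rightarrow> 'v) \<Rightarrow> bool" where
  "plus_subgrad_choice g dg \<longleftrightarrow>
     (\<forall>y. (g y \<le> 0 \<longrightarrow> dg y = 0) \<and>
          (g y > 0 \<longrightarrow> (\<forall>z. g z \<ge> g y + dg y \<bullet> (z - y))))"

end

theory Submission
  imports Defs
begin

text \<open>With \<open>W = I - h L\<close> the scheme reads \<open>y = W x\<close>, followed by a subgradient step on
  \<open>g\<^sub>i\<^sup>+\<close> and a relaxed projection onto \<open>X\<^sub>i\<close>. Since \<open>h\<close> is below the first term of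
  \<open>\<rho>\<close>, \<open>W\<close> is row stochastic with positive diagonal, and strong connectivity makes it
  primitive with a positive stationary distribution \<open>\<pi>\<close>.
  For every feasible \<open>w\<close> the \<open>\<pi>\<close>-weighted squared distance \<open>V\<^sub>w\<close> of the agents to \<open>w\<close>
  satisfies a Robbins--Siegmund inequality, so it converges and the decrease terms
  \<open>\<alpha> \<Sum> \<pi>\<^sub>i d\<^sub>i\<^sup>2\<close> and \<open>\<beta> \<Sum> \<pi>\<^sub>i g\<^sub>i\<^sup>+\<close> are summable. Primitivity of \<open>W\<close> and the vanishing
  perturbations give consensus. As \<open>\<Sum> \<alpha>\<close> and \<open>\<Sum> \<beta>\<close> diverge, the \<open>\<pi>\<close>-average of the
  agents comes arbitrarily close to each constraint family infinitely often, and since it moves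
  only by summable amounts while far from both, it cannot oscillate between the two regions:
  some subsequence converges to a feasible point \<open>l\<close>. Then \<open>V\<^sub>l\<close> has limit \<open>0\<close>, so every
  agent converges to \<open>l\<close>.\<close>

lemma Robbins_Siegmund_deterministic:
  fixes V c b :: "nat \<Rightarrow> real"
  assumes V_nonneg: "\<And>t. V t \<ge> 0" and c_nonneg: "\<And>t. c t \<ge> 0" and b_nonneg: "\<And>t. b t \<ge> 0"
    and b_summable: "summable b" and step: "\<And>t. V (Suc t) \<le> V t - c t + b t"
  shows "convergent V" "summable c"
proof -
  have telescoped: "V T + (\<Sum>s<T. c s) \<le> V 0 + (\<Sum>s<T. b s)" for T
  proof (induction T)
    case (Suc T) then show ?case using step[of T] by simp
  qed simp
  have b_partial: "(\<Sum>s<T. b s) \<le> suminf b" for T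
    using sum_le_suminf[OF b_summable, of "{..<T}"] b_nonneg by auto
  show "summable c"
  proof (rule bounded_imp_summable[where B = "V 0 + suminf b"])
    show "(\<Sum>k\<le>n. c k) \<le> V 0 + suminf b" for n
      using telescoped[of "Suc n"] b_partial[of "Suc n"] V_nonneg[of "Suc n"]
      by (simp add: lessThan_Suc_atMost)
  qed (rule c_nonneg)
  define U where "U T = V T - (\<Sum>s<T. b s)" for T
  have "U (Suc T) \<le> U T" for T
    unfolding U_def using step[of T] c_nonneg[of T] by simp
  then have "decseq U" by (simp add: decseq_Suc_iff)
  moreover have "- suminf b \<le> U T" for T
    unfolding U_def using b_partial[of T] V_nonneg[of T] by linarith
  ultimately obtain L where "U \<longlonglongrightarrow> L" by (metis decseq_convergent)
  then have "(\<lambda>T. U T + (\<Sum>s<T. b s)) \<longlonglongrightarrow> L + suminf b"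
    by (intro tendsto_add summable_LIMSEQ[OF b_summable])
  then show "convergent V" unfolding U_def convergent_def by auto
qed

lemma LIMSEQ_zero_of_contracting_recursion:
  fixes a b :: "nat \<Rightarrow> real"
  assumes a_nonneg: "\<And>t. 0 \<le> a t" and a_bounded: "\<And>t. a t \<le> A" and "N > 0"
    and q: "0 \<le> q" "q < 1"
    and recursion: "\<And>t. a (t + N) \<le> q * a t + b t" and b: "b \<longlonglongrightarrow> 0"
  shows "a \<longlonglongrightarrow> 0"
proof (rule LIMSEQ_I)
  fix r :: real assume "r > 0"
  then have "(1 - q) * (r/2) > 0" using q by simp
  with b obtain T where T: "\<And>t. t \<ge> T \<Longrightarrow> b t < (1 - q) * (r/2)"
    by (metis LIMSEQ_D abs_less_iff diff_zero real_norm_def)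
  have iterated: "a (t + k * N) \<le> q ^ k * A + r / 2" if "t \<ge> T" for t k
  proof (induction k)
    case 0 then show ?case using a_bounded[of t] \<open>r > 0\<close> by simp
  next
    case (Suc k)
    have "a (t + Suc k * N) = a ((t + k * N) + N)" by (simp add: algebra_simps)
    also have "\<dots> \<le> q * a (t + k * N) + b (t + k * N)" by (rule recursion)
    also have "\<dots> \<le> q * (q ^ k * A + r / 2) + (1 - q) * (r/2)"
      using Suc q T[of "t + k * N"] that by (intro add_mono mult_left_mono) auto
    also have "\<dots> = q ^ Suc k * A + r/2" by (simp add: field_simps)
    finally show ?case .
  qed
  have "(\<lambda>k. q ^ k * A) \<longlonglongrightarrow> 0" using q by (intro tendsto_mult_left_zero LIMSEQ_power_zero) auto
  then obtain k where k: "q ^ k * A < r / 2"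
    using \<open>r > 0\<close> by (metis LIMSEQ_D diff_zero half_gt_zero le_refl abs_less_iff real_norm_def)
  show "\<exists>no. \<forall>n\<ge>no. norm (a n - 0) < r"
  proof (intro exI allI impI)
    fix n assume n: "n \<ge> T + k * N"
    then have "a n \<le> q ^ k * A + r/2" using iterated[of "n - k * N" k] by simp
    then show "norm (a n - 0) < r" using k a_nonneg[of n] by simp
  qed
qed

lemma frequently_gt_of_divergent_sum:
  fixes a b :: "nat \<Rightarrow> real"
  assumes "filterlim (\<lambda>N. \<Sum>t<N. a t) at_top sequentially" and "\<And>t. a t \<ge> 0" and "summable b"
  shows "\<exists>t\<ge>T. b t < a t"
proof (rule ccontr)
  assume "\<not> ?thesis"
  then have "summable a"
    by (intro summable_comparison_test'[OF \<open>summable b\<close>, of T]) (use assms(2) in \<open>auto simp: not_less\<close>)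
  moreover have "\<forall>\<^sub>F N in sequentially. suminf a + 1 \<le> (\<Sum>t<N. a t)"
    using assms(1) by (simp add: filterlim_at_top)
  then obtain N where "suminf a + 1 \<le> (\<Sum>t<N. a t)"
    by (auto simp: eventually_sequentially)
  ultimately show False using sum_le_suminf[of a "{..<N}"] assms(2) by auto
qed

lemma tendsto_zero_of_power2:
  fixes f :: "nat \<Rightarrow> real"
  assumes "\<And>t. f t \<ge> 0" and "(\<lambda>t. (f t)\<^sup>2) \<longlonglongrightarrow> 0"
  shows "f \<longlonglongrightarrow> 0"
  using tendsto_real_sqrt[OF assms(2)] assms(1) by simp

text \<open>Once the steps and the remaining summable budget are below a quarter of the separation
  of \<open>A\<close> and \<open>B\<close>, the sequence never again gets half that separation away from \<open>A\<close>.\<close>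
lemma not_recurrent_in_separated_sets:
  fixes z :: "nat \<Rightarrow> 'a::heine_borel"
  assumes "compact A" "closed B" "A \<inter> B = {}"
    and steps: "\<And>t. dist (z (Suc t)) (z t) \<le> s t" and "s \<longlonglongrightarrow> 0"
    and "summable m" and m_nonneg: "\<And>t. m t \<ge> 0"
    and outside: "\<And>t. t \<ge> T \<Longrightarrow> z t \<notin> A \<Longrightarrow> z t \<notin> B \<Longrightarrow> s t \<le> m t"
    and A_recurrent: "\<And>T. \<exists>t\<ge>T. z t \<in> A" and B_recurrent: "\<And>T. \<exists>t\<ge>T. z t \<in> B"
  shows False
proof -
  obtain \<gamma> where "\<gamma> > 0" and \<gamma>: "\<And>u w. u \<in> A \<Longrightarrow> w \<in> B \<Longrightarrow> \<gamma> \<le> dist u w"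
    using separate_compact_closed[OF assms(1-3)] by blast
  obtain N1 where N1: "\<And>t n. t \<ge> N1 \<Longrightarrow> sum m {t..<n} < \<gamma>/4"
    using \<open>summable m\<close>[unfolded summable_Cauchy] \<open>\<gamma> > 0\<close> m_nonneg
    by (metis abs_of_nonneg divide_pos_pos real_norm_def sum_nonneg zero_less_numeral)
  obtain N2 where N2: "\<And>t. t \<ge> N2 \<Longrightarrow> s t < \<gamma>/4"
    using order_tendstoD(2)[OF \<open>s \<longlonglongrightarrow> 0\<close>, of "\<gamma>/4"] \<open>\<gamma> > 0\<close> by (auto simp: eventually_sequentially)
  obtain T' where T': "T' \<ge> max T (max N1 N2)" "z T' \<in> A" using A_recurrent by blast
  have near_A: "\<exists>u\<in>A. dist (z (T' + k)) u \<le> \<gamma>/4 + sum m {T'..<T' + k}" for k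
  proof (induction k)
    case 0 then show ?case using T'(2) \<open>\<gamma> > 0\<close> by force
  next
    case (Suc k)
    define t where "t = T' + k"
    from Suc obtain u where u: "u \<in> A" "dist (z t) u \<le> \<gamma>/4 + sum m {T'..<t}"
      unfolding t_def by blast
    have small: "0 \<le> sum m {T'..<t}" "sum m {T'..<t} < \<gamma>/4" "s t < \<gamma>/4"
      using m_nonneg N1[of T' t] N2[of t] T'(1) by (auto simp: sum_nonneg t_def)
    have sum_Suc: "sum m {T'..<T' + Suc k} = sum m {T'..<t} + m t" unfolding t_def by simp
    consider "z t \<in> A" | "z t \<in> B" | "z t \<notin> A" "z t \<notin> B" by blast
    then show ?case
    proof cases
      case 1
      then show ?thesis using steps[of t] small m_nonneg[of t]
        unfolding sum_Suc by (intro bexI[of _ "z t"]) (auto simp: t_def)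
    next
      case 2
      then show ?thesis using \<gamma>[OF u(1) 2] u(2) small by (simp add: dist_commute)
    next
      case 3
      then have "s t \<le> m t" using outside T'(1) by (simp add: t_def)
      then show ?thesis using u steps[of t] dist_triangle[of "z (Suc t)" u "z t"]
        unfolding sum_Suc by (intro bexI[of _ u]) (auto simp: t_def)
    qed
  qed
  obtain t where "t \<ge> T'" "z t \<in> B" using B_recurrent by blast
  moreover obtain u where "u \<in> A" "dist (z t) u \<le> \<gamma>/4 + sum m {T'..<t}"
    using near_A[of "t - T'"] \<open>t \<ge> T'\<close> by auto
  moreover have "sum m {T'..<t} < \<gamma>/4" using N1 T'(1) by simp
  ultimately have "dist u (z t) < \<gamma>" using \<open>\<gamma> > 0\<close> by (simp add: dist_commute)
  then show False using \<gamma> \<open>u \<in> A\<close> \<open>z t \<in> B\<close> by (simp add: not_le[symmetric])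
qed

lemma norm_convex_combination_diff_le:
  fixes w :: "'n::finite \<Rightarrow> real" and v :: "'n \<Rightarrow> 'v::real_normed_vector"
  assumes "\<And>j. w j \<ge> 0" "(\<Sum>j\<in>UNIV. w j) = 1" "\<And>j. norm (v j - u) \<le> B"
  shows "norm ((\<Sum>j\<in>UNIV. w j *\<^sub>R v j) - u) \<le> B"
proof -
  have "(\<Sum>j\<in>UNIV. w j *\<^sub>R v j) - u = (\<Sum>j\<in>UNIV. w j *\<^sub>R (v j - u))"
    by (simp add: scaleR_diff_right sum_subtractf scaleR_sum_left[symmetric] assms(2))
  also have "norm \<dots> \<le> (\<Sum>j\<in>UNIV. w j * B)"
    by (intro order_trans[OF norm_sum] sum_mono) (use assms in \<open>auto intro: mult_left_mono\<close>)
  also have "\<dots> = B" by (simp add: sum_distrib_right[symmetric] assms(2))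
  finally show ?thesis .
qed

lemma power2_norm_convex_combination_le:
  fixes w :: "'n \<Rightarrow> real" and u :: "'n \<Rightarrow> 'v::real_normed_vector"
  assumes "finite S" "S \<noteq> {}" "\<And>j. j \<in> S \<Longrightarrow> w j \<ge> 0" "(\<Sum>j\<in>S. w j) = 1"
  shows "(norm (\<Sum>j\<in>S. w j *\<^sub>R u j))\<^sup>2 \<le> (\<Sum>j\<in>S. w j * (norm (u j))\<^sup>2)"
proof -
  have "norm (\<Sum>j\<in>S. w j *\<^sub>R u j) \<le> (\<Sum>j\<in>S. w j * norm (u j))"
    using assms(3) by (intro order_trans[OF norm_sum] sum_mono) auto
  then have "(norm (\<Sum>j\<in>S. w j *\<^sub>R u j))\<^sup>2 \<le> (\<Sum>j\<in>S. w j * norm (u j))\<^sup>2"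
    by (intro power_mono) auto
  also have "\<dots> \<le> (\<Sum>j\<in>S. w j * (norm (u j))\<^sup>2)"
    using convex_on_sum[OF assms(1,2) convex_power2, of w "\<lambda>j. norm (u j)"] assms by auto
  finally show ?thesis .
qed

lemma stochastic_rows_diff_eq:
  fixes M :: "'n::finite \<Rightarrow> 'n \<Rightarrow> real" and v :: "'n \<Rightarrow> 'v::real_vector"
  assumes "\<And>i. (\<Sum>j\<in>UNIV. M i j) = 1"
  shows "(\<Sum>j\<in>UNIV. M i j *\<^sub>R v j) - (\<Sum>l\<in>UNIV. M k l *\<^sub>R v l)
    = (\<Sum>j\<in>UNIV. \<Sum>l\<in>UNIV. (M i j * M k l) *\<^sub>R (v j - v l))"
proof -
  have "(\<Sum>j\<in>UNIV. \<Sum>l\<in>UNIV. (M i j * M k l) *\<^sub>R v j) = (\<Sum>j\<in>UNIV. M i j *\<^sub>R v j)"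
    by (simp add: scaleR_sum_left[symmetric] sum_distrib_left[symmetric] assms)
  moreover have "(\<Sum>j\<in>UNIV. \<Sum>l\<in>UNIV. (M i j * M k l) *\<^sub>R v l) = (\<Sum>l\<in>UNIV. M k l *\<^sub>R v l)"
    by (subst sum.swap) (simp add: scaleR_sum_left[symmetric] sum_distrib_right[symmetric] assms)
  ultimately show ?thesis by (simp add: scaleR_diff_right sum_subtractf)
qed

lemma norm_diff_stochastic_rows_le:
  fixes M :: "'n::finite \<Rightarrow> 'n \<Rightarrow> real" and v :: "'n \<Rightarrow> 'v::real_normed_vector"
  assumes M_nonneg: "\<And>i j. M i j \<ge> 0" and M_rows: "\<And>i. (\<Sum>j\<in>UNIV. M i j) = 1"
    and M_ge: "\<And>i j. M i j \<ge> \<delta>" and "\<delta> \<ge> 0"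
    and diam: "\<And>j l. norm (v j - v l) \<le> D"
  shows "norm ((\<Sum>j\<in>UNIV. M i j *\<^sub>R v j) - (\<Sum>j\<in>UNIV. M k j *\<^sub>R v j)) \<le> (1 - \<delta>\<^sup>2) * D"
proof -
  have "D \<ge> 0" using diam[of undefined undefined] by simp
  have "norm (\<Sum>j\<in>UNIV. \<Sum>l\<in>UNIV. (M i j * M k l) *\<^sub>R (v j - v l))
      \<le> (\<Sum>j\<in>UNIV. \<Sum>l\<in>UNIV. M i j * M k l * D - (if l = j then M i j * M k j * D else 0))"
    using M_nonneg diam
    by (intro order_trans[OF norm_sum] sum_mono order_trans[OF norm_sum]) (auto intro: mult_left_mono)
  also have "\<dots> = D - (\<Sum>j\<in>UNIV. M i j * M k j * D)"
    by (simp add: sum_subtractf sum_distrib_left[symmetric] sum_distrib_right[symmetric] M_rows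
        flip: mult.assoc)
  also have "\<dots> \<le> D - \<delta>\<^sup>2 * D"
  proof -
    have "\<delta>\<^sup>2 * D \<le> M i undefined * M k undefined * D"
      using M_ge[of i undefined] M_ge[of k undefined] \<open>\<delta> \<ge> 0\<close> \<open>D \<ge> 0\<close>
      by (intro mult_right_mono) (auto simp: power2_eq_square intro: mult_mono)
    also have "\<dots> \<le> (\<Sum>j\<in>UNIV. M i j * M k j * D)"
      using M_nonneg \<open>D \<ge> 0\<close> by (intro member_le_sum) auto
    finally show ?thesis by simp
  qed
  also have "\<dots> = (1 - \<delta>\<^sup>2) * D" by (simp add: left_diff_distrib)
  finally show ?thesis by (subst stochastic_rows_diff_eq[OF M_rows])
qed

fun mpow :: "('n::finite \<Rightarrow> 'n \<Rightarrow> real) \<Rightarrow> nat \<Rightarrow> 'n \<Rightarrow> 'n \<Rightarrow> real" where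
  "mpow W 0 i j = (if i = j then 1 else 0)"
| "mpow W (Suc k) i j = (\<Sum>l\<in>UNIV. W i l * mpow W k l j)"

lemma mpow_nonneg: "(\<And>a b. W a b \<ge> 0) \<Longrightarrow> mpow W k i j \<ge> 0"
  by (induction k arbitrary: i j) (auto intro!: sum_nonneg mult_nonneg_nonneg)

lemma mpow_row_sum:
  assumes "\<And>a. (\<Sum>b\<in>UNIV. W a b) = 1"
  shows "(\<Sum>j\<in>UNIV. mpow W k i j) = 1"
proof (induction k arbitrary: i)
  case (Suc k)
  have "(\<Sum>j\<in>UNIV. mpow W (Suc k) i j) = (\<Sum>l\<in>UNIV. W i l * (\<Sum>j\<in>UNIV. mpow W k l j))"
    by (simp only: mpow.simps sum_distrib_left) (rule sum.swap)
  then show ?case using Suc assms by simp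
qed simp

lemma mpow_Suc_ge:
  assumes "\<And>a b. W a b \<ge> 0"
  shows "mpow W (Suc k) i j \<ge> W i l * mpow W k l j"
  using assms mpow_nonneg[of W]
  by (simp add: member_le_sum[of l UNIV "\<lambda>l. W i l * mpow W k l j"])

lemma mpow_pos_add:
  assumes "\<And>i j. W i j \<ge> 0" and "\<And>i. W i i > 0" and "mpow W k i j > 0"
  shows "mpow W (k + d) i j > 0"
proof (induction d)
  case (Suc d)
  have "W i i * mpow W (k + d) i j \<le> mpow W (Suc (k + d)) i j" by (rule mpow_Suc_ge[OF assms(1)])
  moreover have "W i i * mpow W (k + d) i j > 0" using Suc assms(2) by simp
  ultimately show ?case by simp
qed (use assms(3) in simp)

lemma mpow_pos_of_path:
  assumes "\<And>i j. W i j \<ge> 0" and "(j, i) \<in> {(u, v). W v u > 0}\<^sup>*"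
  shows "\<exists>k. mpow W k i j > 0"
  using assms(2)
proof (induction rule: rtrancl_induct)
  case base then show ?case by (intro exI[of _ 0]) simp
next
  case (step u i)
  then obtain k where "mpow W k u j > 0" by blast
  then have "W i u * mpow W k u j > 0" using step by simp
  moreover have "W i u * mpow W k u j \<le> mpow W (Suc k) i j" by (rule mpow_Suc_ge[OF assms(1)])
  ultimately show ?case by (intro exI[of _ "Suc k"]) simp
qed

lemma mpow_uniformly_pos:
  fixes W :: "'n::finite \<Rightarrow> 'n \<Rightarrow> real"
  assumes W_nonneg: "\<And>i j. W i j \<ge> 0" and W_diag: "\<And>i. W i i > 0"
    and reach: "\<And>i j. (j, i) \<in> {(u, v). W v u > 0}\<^sup>*"
  obtains N \<delta> where "N > 0" "\<delta> > 0" "\<And>i j. mpow W N i j \<ge> \<delta>"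
proof -
  have "\<forall>p. \<exists>k. mpow W k (fst p) (snd p) > 0"
    using mpow_pos_of_path[OF W_nonneg reach] by blast
  then obtain k where k: "\<And>p. mpow W (k p) (fst p) (snd p) > 0"
    by (metis choice)
  define N where "N = Suc (Max (range k))"
  have pos: "mpow W N i j > 0" for i j
  proof -
    have "k (i, j) \<le> Max (range k)" by simp
    then have "N = k (i, j) + (N - k (i, j))" unfolding N_def by arith
    then show ?thesis using mpow_pos_add[OF W_nonneg W_diag k[of "(i, j)"]] by (metis fst_conv snd_conv)
  qed
  define \<delta> where "\<delta> = Min (range (\<lambda>p. mpow W N (fst p) (snd p)))"
  have "\<delta> > 0" unfolding \<delta>_def using pos by (subst Min_gr_iff) auto
  moreover have "mpow W N i j \<ge> \<delta>" for i j
    unfolding \<delta>_def by (rule Min_le) (auto intro: image_eqI[of _ _ "(i, j)"])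
  ultimately show thesis using that[of N \<delta>] by (simp add: N_def)
qed

lemma norm_perturbed_averaging_le:
  fixes x :: "nat \<Rightarrow> 'n::finite \<Rightarrow> 'v::real_normed_vector"
  assumes W_nonneg: "\<And>i j. W i j \<ge> 0" and W_rows: "\<And>i. (\<Sum>j\<in>UNIV. W i j) = 1"
    and step: "\<And>t i. x (Suc t) i = (\<Sum>j\<in>UNIV. W i j *\<^sub>R x t j) + p t i"
    and p_bound: "\<And>t i. norm (p t i) \<le> e t"
  shows "norm (x (t + k) i - (\<Sum>j\<in>UNIV. mpow W k i j *\<^sub>R x t j)) \<le> (\<Sum>s<k. e (t + s))"
proof (induction k arbitrary: i)
  case 0
  have "(\<Sum>j\<in>UNIV. mpow W 0 i j *\<^sub>R x t j) = x t i"
    by (simp add: if_distrib[of "\<lambda>c. c *\<^sub>R _"] cong: if_cong)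
  then show ?case by simp
next
  case (Suc k)
  have "(\<Sum>j\<in>UNIV. mpow W (Suc k) i j *\<^sub>R x t j) = (\<Sum>l\<in>UNIV. W i l *\<^sub>R (\<Sum>j\<in>UNIV. mpow W k l j *\<^sub>R x t j))"
    by (simp only: mpow.simps scaleR_sum_left scaleR_sum_right scaleR_scaleR) (rule sum.swap)
  then have "x (t + Suc k) i - (\<Sum>j\<in>UNIV. mpow W (Suc k) i j *\<^sub>R x t j)
      = (\<Sum>l\<in>UNIV. W i l *\<^sub>R (x (t + k) l - (\<Sum>j\<in>UNIV. mpow W k l j *\<^sub>R x t j))) + p (t + k) i"
    by (simp add: step scaleR_diff_right sum_subtractf)
  also have "norm \<dots> \<le> (\<Sum>l\<in>UNIV. W i l * (\<Sum>s<k. e (t + s))) + e (t + k)"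
    by (intro order_trans[OF norm_triangle_ineq] add_mono p_bound order_trans[OF norm_sum] sum_mono)
       (use W_nonneg Suc in \<open>auto intro: mult_left_mono\<close>)
  also have "\<dots> = (\<Sum>s<Suc k. e (t + s))" by (simp add: sum_distrib_right[symmetric] W_rows)
  finally show ?case .
qed

text \<open>The stationary distribution is obtained as a Brouwer fixed point on the simplex; strong
  connectivity makes it positive, since zeros propagate along edges.\<close>
lemma stationary_distribution_exists:
  fixes W :: "'n::finite \<Rightarrow> 'n \<Rightarrow> real"
  assumes W_nonneg: "\<And>i j. W i j \<ge> 0" and W_rows: "\<And>i. (\<Sum>j\<in>UNIV. W i j) = 1"
    and reach: "\<And>i j. (j, i) \<in> {(u, v). W v u > 0}\<^sup>*"
  shows "\<exists>\<pi>. (\<forall>i. \<pi> i > 0) \<and> (\<Sum>i\<in>UNIV. \<pi> i) = 1 \<and> (\<forall>j. (\<Sum>i\<in>UNIV. \<pi> i * W i j) = \<pi> j)"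
proof -
  define S :: "(real^'n) set" where "S = {p. (\<forall>i. p$i \<ge> 0) \<and> (\<Sum>i\<in>UNIV. p$i) = 1}"
  define f :: "real^'n \<Rightarrow> real^'n" where "f p = (\<chi> j. \<Sum>i\<in>UNIV. p$i * W i j)" for p
  have "closed S" unfolding S_def
    by (intro closed_Collect_conj closed_Collect_all closed_Collect_le closed_Collect_eq continuous_intros)
  moreover have "bounded S"
    unfolding bounded_iff S_def by (metis (mono_tags, lifting) abs_of_nonneg mem_Collect_eq norm_le_l1_cart sum.cong)
  ultimately have "compact S" by (simp add: compact_eq_bounded_closed)
  moreover have "convex S" unfolding S_def convex_def
    by (auto simp: sum.distrib sum_distrib_left[symmetric] intro!: add_nonneg_nonneg mult_nonneg_nonneg)
  moreover have "(\<chi> i. 1 / real CARD('n)) \<in> S" unfolding S_def by simp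
  moreover have "continuous_on S f" unfolding f_def by (intro continuous_on_vec_lambda continuous_intros)
  moreover have "f \<in> S \<rightarrow> S"
  proof
    fix p assume p: "p \<in> S"
    have "(\<Sum>j\<in>UNIV. \<Sum>i\<in>UNIV. p$i * W i j) = (\<Sum>i\<in>UNIV. p$i * (\<Sum>j\<in>UNIV. W i j))"
      by (simp only: sum_distrib_left) (rule sum.swap)
    then show "f p \<in> S" using p W_nonneg W_rows unfolding S_def f_def
      by (auto intro!: sum_nonneg mult_nonneg_nonneg)
  qed
  ultimately obtain p where p: "p \<in> S" "f p = p" using brouwer by (metis empty_iff)
  define \<pi> where "\<pi> i = p$i" for i
  have stationary: "(\<Sum>i\<in>UNIV. \<pi> i * W i j) = \<pi> j" for j
    using arg_cong[OF p(2), of "\<lambda>q. q$j"] unfolding f_def \<pi>_def by simp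
  have nonneg: "\<pi> i \<ge> 0" for i using p unfolding S_def \<pi>_def by simp
  have sum1: "(\<Sum>i\<in>UNIV. \<pi> i) = 1" using p unfolding S_def \<pi>_def by simp
  have zero_propagates: "\<pi> v = 0" if "(u, v) \<in> {(u, v). W v u > 0}\<^sup>*" "\<pi> u = 0" for u v
    using that
  proof (induction rule: rtrancl_induct)
    case (step w v)
    then have "(\<Sum>i\<in>UNIV. \<pi> i * W i w) = 0" using stationary[of w] by simp
    then have "\<pi> v * W v w = 0" using nonneg W_nonneg by (simp add: sum_nonneg_eq_0_iff)
    then show ?case using step by simp
  qed
  have "\<pi> i > 0" for i
  proof (rule ccontr)
    assume "\<not> \<pi> i > 0"
    then have "\<pi> v = 0" for v using zero_propagates[OF reach] nonneg[of i] by force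
    then show False using sum1 by simp
  qed
  then show ?thesis using sum1 stationary by blast
qed

lemma power2_norm_diff_scaleR:
  fixes a b :: "'a::real_inner"
  shows "(norm (a - r *\<^sub>R b))\<^sup>2 = (norm a)\<^sup>2 - 2 * r * (a \<bullet> b) + r\<^sup>2 * (norm b)\<^sup>2"
  unfolding power2_norm_eq_inner
  by (simp add: inner_diff_left inner_diff_right inner_commute[of b a] algebra_simps power2_eq_square)

lemma power2_dist_relaxed_projection_le:
  fixes S :: "'a::euclidean_space set"
  assumes "convex S" "closed S" "w \<in> S" "0 \<le> a" "a \<le> 1"
  shows "(norm (v - a *\<^sub>R (v - closest_point S v) - w))\<^sup>2
    \<le> (norm (v - w))\<^sup>2 - a * (norm (v - closest_point S v))\<^sup>2"
proof -
  define b where "b = v - closest_point S v"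
  have "b \<bullet> (w - closest_point S v) \<le> 0"
    unfolding b_def by (rule closest_point_dot[OF assms(1-3)])
  then have "(v - w) \<bullet> b \<ge> (norm b)\<^sup>2"
    unfolding b_def power2_norm_eq_inner by (simp add: inner_diff_left inner_diff_right inner_commute)
  moreover have "a\<^sup>2 \<le> a" using assms(4,5) by (simp add: power2_eq_square mult_left_le_one_le)
  moreover have "(norm (v - a *\<^sub>R b - w))\<^sup>2
      = (norm (v - w))\<^sup>2 - 2 * a * ((v - w) \<bullet> b) + a\<^sup>2 * (norm b)\<^sup>2"
    using power2_norm_diff_scaleR[of "v - w" a b] by (simp add: algebra_simps)
  ultimately show ?thesis
    unfolding b_def[symmetric]
    using assms(4) mult_left_mono[of "(norm b)\<^sup>2" "(v - w) \<bullet> b" a]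
      mult_right_mono[of "a\<^sup>2" a "(norm b)\<^sup>2"] by simp
qed

locale consensus_projection_scheme =
  fixes W :: "'n::finite \<Rightarrow> 'n \<Rightarrow> real"
    and g :: "'n \<Rightarrow> 'v::euclidean_space \<Rightarrow> real" and dg :: "'n \<Rightarrow> 'v \<Rightarrow> 'v"
    and X :: "'n \<Rightarrow> 'v set" and K :: real and \<alpha> \<beta> :: "nat \<Rightarrow> real"
    and x y :: "nat \<Rightarrow> 'n \<Rightarrow> 'v"
  assumes W_nonneg: "\<And>i j. W i j \<ge> 0" and W_row_sum: "\<And>i. (\<Sum>j\<in>UNIV. W i j) = 1"
    and W_diag_pos: "\<And>i. W i i > 0" and W_reach: "\<And>i j. (j, i) \<in> {(u, v). W v u > 0}\<^sup>*"
    and g_cont: "\<And>i. continuous_on UNIV (g i)"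
    and X_closed: "\<And>i. closed (X i)" and X_convex: "\<And>i. convex (X i)"
    and dg_zero: "\<And>i v. g i v \<le> 0 \<Longrightarrow> dg i v = 0"
    and dg_subgradient: "\<And>i v w. g i v > 0 \<Longrightarrow> g i w \<ge> g i v + dg i v \<bullet> (w - v)"
    and K_nonneg: "K \<ge> 0" and dg_bounded: "\<And>i v. norm (dg i v) \<le> K"
    and \<alpha>_range: "\<And>t. 0 \<le> \<alpha> t \<and> \<alpha> t \<le> 1"
    and \<alpha>_divergent: "filterlim (\<lambda>N. \<Sum>t<N. \<alpha> t) at_top sequentially"
    and \<alpha>_square_summable: "summable (\<lambda>t. (\<alpha> t)\<^sup>2)"
    and \<beta>_nonneg: "\<And>t. 0 \<le> \<beta> t"
    and \<beta>_divergent: "filterlim (\<lambda>N. \<Sum>t<N. \<beta> t) at_top sequentially"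
    and \<beta>_square_summable: "summable (\<lambda>t. (\<beta> t)\<^sup>2)"
    and solvable: "\<exists>w. \<forall>i. g i w \<le> 0 \<and> w \<in> X i"
    and y_def: "\<And>t i. y t i = (\<Sum>j\<in>UNIV. W i j *\<^sub>R x t j)"
    and x_step: "\<And>t i. x (Suc t) i = (1 - \<alpha> t) *\<^sub>R (y t i - \<beta> t *\<^sub>R dg i (y t i))
        + \<alpha> t *\<^sub>R closest_point (X i) (y t i - \<beta> t *\<^sub>R dg i (y t i))"
begin

definition feasible :: "'v \<Rightarrow> bool" where
  "feasible w \<longleftrightarrow> (\<forall>i. g i w \<le> 0 \<and> w \<in> X i)"

definition \<pi> :: "'n \<Rightarrow> real" where
  "\<pi> = (SOME \<pi>. (\<forall>i. \<pi> i > 0) \<and> (\<Sum>i\<in>UNIV. \<pi> i) = 1 \<and> (\<forall>j. (\<Sum>i\<in>UNIV. \<pi> i * W i j) = \<pi> j))"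

definition gplus :: "'n \<Rightarrow> 'v \<Rightarrow> real" where
  "gplus i w = max (g i w) 0"

definition \<xi> :: "nat \<Rightarrow> 'n \<Rightarrow> 'v" where
  "\<xi> t i = y t i - \<beta> t *\<^sub>R dg i (y t i)"

definition dX :: "nat \<Rightarrow> 'n \<Rightarrow> real" where
  "dX t i = norm (\<xi> t i - closest_point (X i) (\<xi> t i))"

definition V :: "'v \<Rightarrow> nat \<Rightarrow> real" where
  "V w t = (\<Sum>i\<in>UNIV. \<pi> i * (norm (x t i - w))\<^sup>2)"

definition G :: "nat \<Rightarrow> real" where
  "G t = (\<Sum>i\<in>UNIV. \<pi> i * gplus i (y t i))"

definition DX2 :: "nat \<Rightarrow> real" where
  "DX2 t = (\<Sum>i\<in>UNIV. \<pi> i * (dX t i)\<^sup>2)"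

lemma \<pi>_props: "(\<forall>i. \<pi> i > 0) \<and> (\<Sum>i\<in>UNIV. \<pi> i) = 1 \<and> (\<forall>j. (\<Sum>i\<in>UNIV. \<pi> i * W i j) = \<pi> j)"
  unfolding \<pi>_def by (rule someI_ex[OF stationary_distribution_exists[OF W_nonneg W_row_sum W_reach]])

lemma \<pi>_pos: "\<pi> i > 0" and \<pi>_sum: "(\<Sum>i\<in>UNIV. \<pi> i) = 1"
  and \<pi>_stationary: "(\<Sum>i\<in>UNIV. \<pi> i * W i j) = \<pi> j"
  using \<pi>_props by auto

lemma \<pi>_nonneg: "\<pi> i \<ge> 0"
  using \<pi>_pos[of i] by simp

lemma \<pi>_lower_bound: obtains p where "p > 0" "\<And>i. \<pi> i \<ge> p"
  using that[of "Min (range \<pi>)"] \<pi>_pos by (simp add: Min_gr_iff)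

lemma X_nonempty: "X i \<noteq> {}"
  using solvable by auto

lemma gplus_nonneg: "gplus i w \<ge> 0"
  unfolding gplus_def by simp

lemma gplus_feasible: "feasible w \<Longrightarrow> gplus i w = 0"
  unfolding feasible_def gplus_def by simp

lemma gplus_subgradient: "gplus i w \<ge> gplus i v + dg i v \<bullet> (w - v)"
  using dg_subgradient[of i v w] dg_zero[of i v] unfolding gplus_def by (cases "g i v > 0") auto

lemma gplus_lipschitz: "\<bar>gplus i v - gplus i w\<bar> \<le> K * norm (v - w)"
proof -
  have one_sided: "gplus i u - gplus i u' \<le> K * norm (u - u')" for u u'
  proof -
    have "gplus i u - gplus i u' \<le> dg i u \<bullet> (u - u')"
      using gplus_subgradient[where i = i and v = u and w = u'] by (simp add: inner_diff_right)
    also have "\<dots> \<le> K * norm (u - u')"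
      using Cauchy_Schwarz_ineq2[of "dg i u" "u - u'"] dg_bounded[of i u]
      by (meson abs_ge_self mult_right_mono norm_ge_zero order_trans)
    finally show ?thesis .
  qed
  show ?thesis using one_sided[of v w] one_sided[of w v] by (simp add: abs_le_iff norm_minus_commute)
qed

lemma continuous_on_gplus: "continuous_on UNIV (gplus i)"
  unfolding gplus_def by (intro continuous_intros g_cont)

lemma x_Suc_eq: "x (Suc t) i = \<xi> t i - \<alpha> t *\<^sub>R (\<xi> t i - closest_point (X i) (\<xi> t i))"
  using x_step[of t i] unfolding \<xi>_def by (simp add: algebra_simps)

lemma power2_dist_subgradient_step_le:
  assumes "feasible w"
  shows "(norm (\<xi> t i - w))\<^sup>2 \<le> (norm (y t i - w))\<^sup>2 - 2 * \<beta> t * gplus i (y t i) + (\<beta> t)\<^sup>2 * K\<^sup>2"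
proof -
  let ?v = "y t i - w" and ?d = "dg i (y t i)"
  have "gplus i (y t i) \<le> ?d \<bullet> ?v"
    using gplus_subgradient[where i = i and v = "y t i" and w = w] gplus_feasible[OF assms, of i] by (simp add: inner_diff_right)
  then have "2 * \<beta> t * gplus i (y t i) \<le> 2 * \<beta> t * (?v \<bullet> ?d)"
    using \<beta>_nonneg[of t] by (simp add: inner_commute mult_left_mono)
  moreover have "(\<beta> t)\<^sup>2 * (norm ?d)\<^sup>2 \<le> (\<beta> t)\<^sup>2 * K\<^sup>2"
    using dg_bounded[of i "y t i"] by (intro mult_left_mono power_mono) auto
  moreover have "\<xi> t i - w = ?v - \<beta> t *\<^sub>R ?d" unfolding \<xi>_def by simp
  then have "(norm (\<xi> t i - w))\<^sup>2 = (norm ?v)\<^sup>2 - 2 * \<beta> t * (?v \<bullet> ?d) + (\<beta> t)\<^sup>2 * (norm ?d)\<^sup>2"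
    by (simp only: power2_norm_diff_scaleR)
  ultimately show ?thesis by linarith
qed

lemma power2_dist_step_le:
  assumes "feasible w"
  shows "(norm (x (Suc t) i - w))\<^sup>2
    \<le> (norm (y t i - w))\<^sup>2 - \<alpha> t * (dX t i)\<^sup>2 - 2 * \<beta> t * gplus i (y t i) + (\<beta> t)\<^sup>2 * K\<^sup>2"
proof -
  have "w \<in> X i" using assms unfolding feasible_def by simp
  then have "(norm (x (Suc t) i - w))\<^sup>2 \<le> (norm (\<xi> t i - w))\<^sup>2 - \<alpha> t * (dX t i)\<^sup>2"
    unfolding x_Suc_eq dX_def using \<alpha>_range[of t]
    by (intro power2_dist_relaxed_projection_le X_convex X_closed) auto
  then show ?thesis using power2_dist_subgradient_step_le[OF assms, of t i] by simp
qed

lemma y_diff_eq: "y t i - w = (\<Sum>j\<in>UNIV. W i j *\<^sub>R (x t j - w))"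
  unfolding y_def by (simp add: scaleR_diff_right sum_subtractf scaleR_sum_left[symmetric] W_row_sum)

text \<open>Jensen's inequality and stationarity of \<open>\<pi>\<close>.\<close>
lemma V_averaged_le: "(\<Sum>i\<in>UNIV. \<pi> i * (norm (y t i - w))\<^sup>2) \<le> V w t"
proof -
  have "(\<Sum>i\<in>UNIV. \<pi> i * (norm (y t i - w))\<^sup>2)
      \<le> (\<Sum>i\<in>UNIV. \<pi> i * (\<Sum>j\<in>UNIV. W i j * (norm (x t j - w))\<^sup>2))"
    unfolding y_diff_eq using \<pi>_nonneg W_nonneg W_row_sum
    by (intro sum_mono mult_left_mono power2_norm_convex_combination_le) auto
  also have "\<dots> = (\<Sum>j\<in>UNIV. (\<Sum>i\<in>UNIV. \<pi> i * W i j) * (norm (x t j - w))\<^sup>2)"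
    by (simp only: sum_distrib_left sum_distrib_right mult.assoc) (rule sum.swap)
  also have "\<dots> = V w t" unfolding V_def \<pi>_stationary ..
  finally show ?thesis .
qed

lemma V_step_le:
  assumes "feasible w"
  shows "V w (Suc t) \<le> V w t - (\<alpha> t * DX2 t + 2 * (\<beta> t * G t)) + (\<beta> t)\<^sup>2 * K\<^sup>2"
proof -
  have "V w (Suc t) \<le> (\<Sum>i\<in>UNIV. \<pi> i * ((norm (y t i - w))\<^sup>2
      - (\<alpha> t * (dX t i)\<^sup>2 + 2 * \<beta> t * gplus i (y t i)) + (\<beta> t)\<^sup>2 * K\<^sup>2))"
    unfolding V_def using power2_dist_step_le[OF assms] \<pi>_nonneg
    by (intro sum_mono mult_left_mono) (auto simp: algebra_simps)
  also have "\<dots> = (\<Sum>i\<in>UNIV. \<pi> i * (norm (y t i - w))\<^sup>2)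
      - (\<alpha> t * DX2 t + 2 * (\<beta> t * G t)) + (\<beta> t)\<^sup>2 * K\<^sup>2"
    unfolding DX2_def G_def
    by (simp add: algebra_simps sum_subtractf sum.distrib sum_distrib_left sum_distrib_right[symmetric] \<pi>_sum)
  finally show ?thesis using V_averaged_le[of t w] by simp
qed

lemma V_nonneg: "V w t \<ge> 0"
  unfolding V_def using \<pi>_nonneg by (intro sum_nonneg mult_nonneg_nonneg) auto

lemma G_nonneg: "G t \<ge> 0"
  unfolding G_def using \<pi>_nonneg gplus_nonneg by (intro sum_nonneg mult_nonneg_nonneg) auto

lemma DX2_nonneg: "DX2 t \<ge> 0"
  unfolding DX2_def using \<pi>_nonneg by (intro sum_nonneg mult_nonneg_nonneg) auto

lemma V_convergent_and_decrease_summable: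
  assumes "feasible w"
  shows "convergent (V w)" "summable (\<lambda>t. \<alpha> t * DX2 t + 2 * (\<beta> t * G t))"
  using Robbins_Siegmund_deterministic[OF V_nonneg _ _ summable_mult2[OF \<beta>_square_summable]
      V_step_le[OF assms]] \<alpha>_range \<beta>_nonneg DX2_nonneg G_nonneg
  by auto

lemma \<pi>_norm_le_V: "\<pi> i * (norm (x t i - w))\<^sup>2 \<le> V w t"
  unfolding V_def using \<pi>_nonneg
  by (intro member_le_sum[of i UNIV "\<lambda>i. \<pi> i * (norm (x t i - w))\<^sup>2"] mult_nonneg_nonneg) auto

lemma x_bounded: obtains c R where "\<And>t i. norm (x t i - c) \<le> R"
proof -
  obtain w where w: "feasible w" using solvable unfolding feasible_def by blast
  then have "Bseq (V w)" using V_convergent_and_decrease_summable(1) convergent_imp_Bseq by blast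
  then obtain B where B: "\<And>t. V w t \<le> B" by (auto simp: Bseq_def abs_le_iff)
  obtain p where p: "p > 0" "\<And>i. \<pi> i \<ge> p" using \<pi>_lower_bound by blast
  have "p * (norm (x t i - w))\<^sup>2 \<le> B" for t i
    using \<pi>_norm_le_V[of i t w] B[of t] mult_right_mono[OF p(2)[of i], of "(norm (x t i - w))\<^sup>2"] by simp
  then have "norm (x t i - w) \<le> sqrt (B / p)" for t i
    using p(1) by (simp add: real_le_rsqrt field_simps)
  then show thesis by (rule that)
qed

lemma norm_step_perturbation_le:
  "norm (x (Suc t) i - y t i) \<le> \<beta> t * K + \<alpha> t * dX t i"
proof -
  have "x (Suc t) i - y t i = - (\<beta> t *\<^sub>R dg i (y t i)) - \<alpha> t *\<^sub>R (\<xi> t i - closest_point (X i) (\<xi> t i))"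
    unfolding x_Suc_eq by (simp add: \<xi>_def)
  also have "norm \<dots> \<le> \<beta> t * norm (dg i (y t i)) + \<alpha> t * dX t i"
    using norm_triangle_ineq4[of "- (\<beta> t *\<^sub>R dg i (y t i))" "\<alpha> t *\<^sub>R (\<xi> t i - closest_point (X i) (\<xi> t i))"] \<beta>_nonneg[of t] \<alpha>_range[of t]
    unfolding dX_def by simp
  also have "\<dots> \<le> \<beta> t * K + \<alpha> t * dX t i"
    using dg_bounded[of i "y t i"] \<beta>_nonneg[of t] by (simp add: mult_left_mono)
  finally show ?thesis .
qed

lemma \<beta>_tendsto_zero: "\<beta> \<longlonglongrightarrow> 0"
  using tendsto_zero_of_power2[OF \<beta>_nonneg summable_LIMSEQ_zero[OF \<beta>_square_summable]] .

lemma \<alpha>_dX_tendsto_zero: "(\<lambda>t. \<alpha> t * dX t i) \<longlonglongrightarrow> 0"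
proof (rule tendsto_zero_of_power2)
  show "\<alpha> t * dX t i \<ge> 0" for t using \<alpha>_range[of t] by (simp add: dX_def)
  obtain w where "feasible w" using solvable unfolding feasible_def by blast
  have decrease_null: "(\<lambda>t. \<alpha> t * DX2 t + 2 * (\<beta> t * G t)) \<longlonglongrightarrow> 0"
    by (rule summable_LIMSEQ_zero[OF V_convergent_and_decrease_summable(2)[OF \<open>feasible w\<close>]])
  have "(\<alpha> t * dX t i)\<^sup>2 \<le> (\<alpha> t * DX2 t + 2 * (\<beta> t * G t)) / \<pi> i" for t
  proof -
    have "(\<alpha> t * dX t i)\<^sup>2 = \<alpha> t * (\<alpha> t * (dX t i)\<^sup>2)"
      by (simp add: power2_eq_square)
    also have "\<dots> \<le> \<alpha> t * (dX t i)\<^sup>2"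
      using \<alpha>_range[of t] by (intro mult_left_le_one_le) auto
    also have "\<dots> \<le> \<alpha> t * DX2 t / \<pi> i"
    proof -
      have "\<pi> i * (dX t i)\<^sup>2 \<le> DX2 t"
        unfolding DX2_def using \<pi>_nonneg by (intro member_le_sum[of i UNIV "\<lambda>i. \<pi> i * (dX t i)\<^sup>2"]) auto
      then have "\<alpha> t * (\<pi> i * (dX t i)\<^sup>2) \<le> \<alpha> t * DX2 t"
        using \<alpha>_range[of t] by (simp add: mult_left_mono)
      then show ?thesis using \<pi>_pos[of i] by (simp add: pos_le_divide_eq ac_simps)
    qed
    also have "\<dots> \<le> (\<alpha> t * DX2 t + 2 * (\<beta> t * G t)) / \<pi> i"
      using \<beta>_nonneg[of t] G_nonneg[of t] \<pi>_pos[of i] by (simp add: divide_right_mono)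
    finally show ?thesis .
  qed
  then show "(\<lambda>t. (\<alpha> t * dX t i)\<^sup>2) \<longlonglongrightarrow> 0"
    by (intro tendsto_sandwich[OF _ _ tendsto_const tendsto_divide_zero[OF decrease_null, of "\<pi> i"]]) simp_all
qed

lemma mpow_W_nonneg: "mpow W k i j \<ge> 0"
  by (rule mpow_nonneg) (rule W_nonneg)

lemma mpow_W_row_sum: "(\<Sum>j\<in>UNIV. mpow W k i j) = 1"
  by (rule mpow_row_sum) (rule W_row_sum)

definition diam :: "nat \<Rightarrow> real" where
  "diam t = Max (range (\<lambda>p. norm (x t (fst p) - x t (snd p))))"

lemma diam_ge: "norm (x t i - x t k) \<le> diam t"
  unfolding diam_def by (rule Max_ge) (auto intro: image_eqI[of _ _ "(i, k)"])

lemma diam_le_iff: "diam t \<le> r \<longleftrightarrow> (\<forall>i k. norm (x t i - x t k) \<le> r)"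
  unfolding diam_def by (subst Max_le_iff) auto

lemma diam_nonneg: "diam t \<ge> 0"
  using diam_ge[of t undefined undefined] by simp

text \<open>Over \<open>N\<close> steps the agents follow the primitive matrix \<open>W\<^sup>N\<close> up to the accumulated
  perturbations, and Dobrushin's estimate shrinks the diameter by the factor \<open>1 - \<delta>\<^sup>2\<close>.\<close>
lemma diam_contraction:
  assumes "\<And>i j. mpow W N i j \<ge> \<delta>" "\<delta> \<ge> 0"
  shows "diam (t + N) \<le> (1 - \<delta>\<^sup>2) * diam t
    + 2 * (\<Sum>s<N. \<beta> (t + s) * K + \<alpha> (t + s) * (\<Sum>j\<in>UNIV. dX (t + s) j))"
  unfolding diam_le_iff
proof (intro allI)
  fix i k
  let ?e = "\<lambda>t. \<beta> t * K + \<alpha> t * (\<Sum>j\<in>UNIV. dX t j)"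
  let ?P = "\<lambda>i. (\<Sum>j\<in>UNIV. mpow W N i j *\<^sub>R x t j)"
  have bound: "norm (x (Suc t) i - y t i) \<le> ?e t" for t i
  proof -
    have "dX t i \<le> (\<Sum>j\<in>UNIV. dX t j)" by (rule member_le_sum) (auto simp: dX_def)
    then have "\<alpha> t * dX t i \<le> \<alpha> t * (\<Sum>j\<in>UNIV. dX t j)" using \<alpha>_range[of t] by (simp add: mult_left_mono)
    then show ?thesis using norm_step_perturbation_le[of t i] by simp
  qed
  have step: "x (Suc t) i = (\<Sum>j\<in>UNIV. W i j *\<^sub>R x t j) + (x (Suc t) i - y t i)" for t i
    by (simp add: y_def)
  have perturbed: "norm (x (t + N) i - ?P i) \<le> (\<Sum>s<N. ?e (t + s))" for i
    by (rule norm_perturbed_averaging_le[where p = "\<lambda>t i. x (Suc t) i - y t i", OF W_nonneg W_row_sum step bound])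
  have "norm (?P i - ?P k) \<le> (1 - \<delta>\<^sup>2) * diam t"
    using assms diam_ge by (intro norm_diff_stochastic_rows_le mpow_W_nonneg mpow_W_row_sum)
  moreover have "norm (x (t + N) i - x (t + N) k)
      \<le> norm (x (t + N) i - ?P i) + norm (x (t + N) k - ?P k) + norm (?P i - ?P k)"
    using norm_triangle_ineq[of "x (t + N) i - ?P i - (x (t + N) k - ?P k)" "?P i - ?P k"]
      norm_triangle_ineq4[of "x (t + N) i - ?P i" "x (t + N) k - ?P k"] by simp
  ultimately show "norm (x (t + N) i - x (t + N) k) \<le> (1 - \<delta>\<^sup>2) * diam t + 2 * (\<Sum>s<N. ?e (t + s))"
    using perturbed[of i] perturbed[of k] by simp
qed

lemma diam_tendsto_zero: "diam \<longlonglongrightarrow> 0"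
proof -
  obtain N \<delta> where "N > 0" "\<delta> > 0" and \<delta>: "\<And>i j. mpow W N i j \<ge> \<delta>"
    using mpow_uniformly_pos[OF W_nonneg W_diag_pos W_reach] by blast
  have "\<delta> \<le> mpow W N undefined undefined" by (rule \<delta>)
  also have "\<dots> \<le> 1"
    using member_le_sum[of undefined UNIV "mpow W N undefined"] mpow_W_nonneg mpow_W_row_sum by simp
  finally have "\<delta>\<^sup>2 \<le> 1" using \<open>\<delta> > 0\<close> by (simp add: power_le_one)
  obtain c R where R: "\<And>t i. norm (x t i - c) \<le> R" using x_bounded by blast
  have "norm (x t i - x t k) \<le> 2 * R" for t i k
    using R[of t i] R[of t k] dist_triangle2[of "x t i" "x t k" c] by (simp add: dist_norm)
  then have "diam t \<le> 2 * R" for t by (simp add: diam_le_iff)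
  moreover have "(\<lambda>t. 2 * (\<Sum>s<N. \<beta> (t + s) * K + \<alpha> (t + s) * (\<Sum>j\<in>UNIV. dX (t + s) j))) \<longlonglongrightarrow> 0"
  proof -
    have "(\<lambda>t. \<beta> t * K + (\<Sum>j\<in>UNIV. \<alpha> t * dX t j)) \<longlonglongrightarrow> 0 * K + (\<Sum>j\<in>(UNIV::'n set). 0)"
      by (intro tendsto_intros \<beta>_tendsto_zero \<alpha>_dX_tendsto_zero)
    then have "(\<lambda>t. \<beta> t * K + \<alpha> t * (\<Sum>j\<in>UNIV. dX t j)) \<longlonglongrightarrow> 0"
      by (simp add: sum_distrib_left)
    then have "(\<lambda>t. \<beta> (t + s) * K + \<alpha> (t + s) * (\<Sum>j\<in>UNIV. dX (t + s) j)) \<longlonglongrightarrow> 0" for s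
      by (rule LIMSEQ_ignore_initial_segment)
    then show ?thesis by (intro tendsto_mult_right_zero tendsto_null_sum)
  qed
  ultimately show ?thesis
    using \<open>N > 0\<close> \<open>\<delta> > 0\<close> \<open>\<delta>\<^sup>2 \<le> 1\<close> diam_contraction[OF \<delta>]
    by (intro LIMSEQ_zero_of_contracting_recursion[OF diam_nonneg, where q = "1 - \<delta>\<^sup>2"
        and b = "\<lambda>t. 2 * (\<Sum>s<N. \<beta> (t + s) * K + \<alpha> (t + s) * (\<Sum>j\<in>UNIV. dX (t + s) j))"]) auto
qed

definition avg :: "nat \<Rightarrow> 'v" where
  "avg t = (\<Sum>i\<in>UNIV. \<pi> i *\<^sub>R x t i)"

definition DX :: "nat \<Rightarrow> real" where
  "DX t = (\<Sum>i\<in>UNIV. \<pi> i * dX t i)"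

definition Gviol :: "'v \<Rightarrow> real" where
  "Gviol w = (\<Sum>i\<in>UNIV. \<pi> i * gplus i w)"

definition Xviol :: "'v \<Rightarrow> real" where
  "Xviol w = (\<Sum>i\<in>UNIV. \<pi> i * infdist w (X i))"

lemma norm_avg_diff_le: "norm (avg t - x t i) \<le> diam t"
  unfolding avg_def by (rule norm_convex_combination_diff_le[OF \<pi>_nonneg \<pi>_sum diam_ge])

lemma norm_y_avg_le: "norm (y t i - avg t) \<le> 2 * diam t"
proof -
  have "norm (y t i - x t i) \<le> diam t"
    unfolding y_def by (rule norm_convex_combination_diff_le[OF W_nonneg W_row_sum diam_ge])
  then show ?thesis
    using norm_avg_diff_le[of t i] dist_triangle2[of "y t i" "avg t" "x t i"] by (simp add: dist_norm)
qed

lemma avg_bounded: obtains c R where "\<And>t. norm (avg t - c) \<le> R"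
proof -
  obtain c R where "\<And>t i. norm (x t i - c) \<le> R" using x_bounded by blast
  then show thesis
    using that[of c R] unfolding avg_def by (metis norm_convex_combination_diff_le \<pi>_nonneg \<pi>_sum)
qed

lemma norm_avg_step_le: "norm (avg (Suc t) - avg t) \<le> \<beta> t * K + \<alpha> t * DX t"
proof -
  have "(\<Sum>i\<in>UNIV. \<pi> i *\<^sub>R y t i) = avg t"
    unfolding y_def avg_def scaleR_sum_right scaleR_scaleR
    by (subst sum.swap) (simp add: mult.commute scaleR_sum_left[symmetric] \<pi>_stationary)
  then have "avg (Suc t) - avg t = (\<Sum>i\<in>UNIV. \<pi> i *\<^sub>R (x (Suc t) i - y t i))"
    unfolding avg_def by (simp add: scaleR_diff_right sum_subtractf)
  also have "norm \<dots> \<le> (\<Sum>i\<in>UNIV. \<pi> i * (\<beta> t * K + \<alpha> t * dX t i))"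
    by (intro order_trans[OF norm_sum] sum_mono)
       (use \<pi>_nonneg norm_step_perturbation_le in \<open>auto intro: mult_left_mono\<close>)
  also have "\<dots> = \<beta> t * K + \<alpha> t * DX t"
    unfolding DX_def distrib_left sum.distrib sum_distrib_right[symmetric] \<pi>_sum
    by (simp add: sum_distrib_left mult_ac)
  finally show ?thesis .
qed

lemma avg_step_bound_tendsto_zero: "(\<lambda>t. \<beta> t * K + \<alpha> t * DX t) \<longlonglongrightarrow> 0"
proof -
  have "(\<lambda>t. \<beta> t * K + (\<Sum>i\<in>UNIV. \<pi> i * (\<alpha> t * dX t i))) \<longlonglongrightarrow> 0 * K + (\<Sum>i\<in>(UNIV::'n set). \<pi> i * 0)"
    by (intro tendsto_intros \<beta>_tendsto_zero \<alpha>_dX_tendsto_zero)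
  then show ?thesis unfolding DX_def by (simp add: sum_distrib_left mult.left_commute)
qed

lemma DX_nonneg: "DX t \<ge> 0"
  unfolding DX_def dX_def using \<pi>_nonneg by (intro sum_nonneg mult_nonneg_nonneg) auto

lemma DX_square_le: "(DX t)\<^sup>2 \<le> DX2 t"
  using power2_norm_convex_combination_le[of UNIV \<pi> "dX t"] \<pi>_nonneg \<pi>_sum DX_nonneg[of t]
  unfolding DX_def DX2_def by (simp add: dX_def)

lemma Gviol_nonneg: "Gviol w \<ge> 0"
  unfolding Gviol_def using \<pi>_nonneg gplus_nonneg by (intro sum_nonneg mult_nonneg_nonneg) auto

lemma Xviol_nonneg: "Xviol w \<ge> 0"
  unfolding Xviol_def using \<pi>_nonneg by (intro sum_nonneg mult_nonneg_nonneg) (auto simp: infdist_nonneg)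

lemma continuous_on_Gviol: "continuous_on UNIV Gviol"
  unfolding Gviol_def by (intro continuous_intros continuous_on_gplus[THEN continuous_on_subset]) auto

lemma continuous_on_Xviol: "continuous_on UNIV Xviol"
  unfolding Xviol_def by (intro continuous_intros continuous_on_infdist)

lemma feasible_if_no_violation:
  assumes "Gviol w + Xviol w = 0" shows "feasible w"
  unfolding feasible_def
proof (intro allI conjI)
  fix i
  have "Gviol w = 0" "Xviol w = 0" using assms Gviol_nonneg[of w] Xviol_nonneg[of w] by auto
  then have "\<pi> i * gplus i w = 0" "\<pi> i * infdist w (X i) = 0"
    unfolding Gviol_def Xviol_def using \<pi>_nonneg gplus_nonneg
    by (simp_all add: sum_nonneg_eq_0_iff infdist_nonneg)
  then show "g i w \<le> 0" "w \<in> X i"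
    using \<pi>_pos[of i] in_closed_iff_infdist_zero[OF X_closed X_nonempty] by (auto simp: gplus_def)
qed

lemma Gviol_avg_le: "Gviol (avg t) \<le> G t + 2 * K * diam t"
proof -
  have "gplus i (avg t) \<le> gplus i (y t i) + 2 * K * diam t" for i
    using gplus_lipschitz[of i "avg t" "y t i"] norm_y_avg_le[of t i] K_nonneg
      mult_left_mono[of "norm (y t i - avg t)" "2 * diam t" K]
    by (simp add: abs_le_iff norm_minus_commute)
  then have "Gviol (avg t) \<le> (\<Sum>i\<in>UNIV. \<pi> i * (gplus i (y t i) + 2 * K * diam t))"
    unfolding Gviol_def using \<pi>_nonneg by (intro sum_mono mult_left_mono) auto
  then show ?thesis
    unfolding G_def by (simp add: distrib_left sum.distrib sum_distrib_right[symmetric] \<pi>_sum)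
qed

lemma Xviol_avg_le: "Xviol (avg t) \<le> DX t + 2 * diam t + \<beta> t * K"
proof -
  have "infdist (avg t) (X i) \<le> dX t i + (2 * diam t + \<beta> t * K)" for i
  proof -
    have "dX t i = infdist (\<xi> t i) (X i)"
      unfolding dX_def infdist_eq_setdist setdist_closest_point[OF X_closed X_nonempty] dist_norm ..
    moreover have "dist (avg t) (\<xi> t i) \<le> norm (y t i - avg t) + norm (\<beta> t *\<^sub>R dg i (y t i))"
      unfolding \<xi>_def dist_norm using norm_triangle_ineq4[of "y t i - avg t" "\<beta> t *\<^sub>R dg i (y t i)"]
      by (simp add: norm_minus_commute algebra_simps)
    moreover have "norm (\<beta> t *\<^sub>R dg i (y t i)) \<le> \<beta> t * K"
      using dg_bounded[of i "y t i"] \<beta>_nonneg[of t] by (simp add: mult_left_mono)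
    ultimately show ?thesis
      using infdist_triangle[of "avg t" "X i" "\<xi> t i"] norm_y_avg_le[of t i] by (simp add: dist_commute)
  qed
  then have "Xviol (avg t) \<le> (\<Sum>i\<in>UNIV. \<pi> i * (dX t i + (2 * diam t + \<beta> t * K)))"
    unfolding Xviol_def using \<pi>_nonneg by (intro sum_mono mult_left_mono) auto
  then show ?thesis
    unfolding DX_def by (simp add: distrib_left sum.distrib sum_distrib_right[symmetric] \<pi>_sum)
qed

lemma eventually_G_large:
  assumes "\<epsilon> > 0" shows "\<forall>\<^sub>F t in sequentially. \<epsilon> < Gviol (avg t) \<longrightarrow> \<epsilon>/2 \<le> G t"
proof -
  have "\<forall>\<^sub>F t in sequentially. 2 * K * diam t < \<epsilon>/2"
    using assms by (intro order_tendstoD(2)[OF tendsto_mult_right_zero[OF diam_tendsto_zero]]) auto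
  then show ?thesis
  proof (rule eventually_mono)
    show "2 * K * diam t < \<epsilon>/2 \<Longrightarrow> \<epsilon> < Gviol (avg t) \<longrightarrow> \<epsilon>/2 \<le> G t" for t
      using Gviol_avg_le[of t] by linarith
  qed
qed

lemma eventually_DX_large:
  assumes "\<epsilon> > 0" shows "\<forall>\<^sub>F t in sequentially. \<epsilon> < Xviol (avg t) \<longrightarrow> \<epsilon>/2 \<le> DX t"
proof -
  have "(\<lambda>t. 2 * diam t + \<beta> t * K) \<longlonglongrightarrow> 2 * 0 + 0 * K"
    by (intro tendsto_intros diam_tendsto_zero \<beta>_tendsto_zero)
  then have "\<forall>\<^sub>F t in sequentially. 2 * diam t + \<beta> t * K < \<epsilon>/2"
    using assms by (intro order_tendstoD(2)) auto
  then show ?thesis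
  proof (rule eventually_mono)
    show "2 * diam t + \<beta> t * K < \<epsilon>/2 \<Longrightarrow> \<epsilon> < Xviol (avg t) \<longrightarrow> \<epsilon>/2 \<le> DX t" for t
      using Xviol_avg_le[of t] by linarith
  qed
qed

lemma \<alpha>_DX2_summable: "summable (\<lambda>t. \<alpha> t * DX2 t)"
  and \<beta>_G_summable: "summable (\<lambda>t. \<beta> t * G t)"
proof -
  obtain w where "feasible w" using solvable unfolding feasible_def by blast
  note decrease = V_convergent_and_decrease_summable(2)[OF this]
  show "summable (\<lambda>t. \<alpha> t * DX2 t)" "summable (\<lambda>t. \<beta> t * G t)"
    using \<alpha>_range \<beta>_nonneg DX2_nonneg G_nonneg
    by (auto intro!: summable_comparison_test'[OF decrease, where N = 0])
qed

lemma frequently_Gviol_le: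
  assumes "\<epsilon> > 0" shows "\<exists>t\<ge>T. Gviol (avg t) \<le> \<epsilon>"
proof -
  obtain T1 where T1: "\<And>t. t \<ge> T1 \<Longrightarrow> \<epsilon> < Gviol (avg t) \<longrightarrow> \<epsilon>/2 \<le> G t"
    using eventually_G_large[OF assms] by (auto simp: eventually_sequentially)
  obtain t where t: "t \<ge> max T T1" "2/\<epsilon> * (\<beta> t * G t) < \<beta> t"
    using frequently_gt_of_divergent_sum[OF \<beta>_divergent \<beta>_nonneg summable_mult[OF \<beta>_G_summable]]
    by blast
  have "\<not> \<epsilon>/2 \<le> G t"
  proof
    assume "\<epsilon>/2 \<le> G t"
    then have "\<beta> t * (\<epsilon>/2) \<le> \<beta> t * G t" using \<beta>_nonneg[of t] by (rule mult_left_mono)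
    then show False using t(2) assms by (simp add: field_simps)
  qed
  then show ?thesis using T1[of t] t(1) by (intro exI[of _ t]) auto
qed

lemma frequently_Xviol_le:
  assumes "\<epsilon> > 0" shows "\<exists>t\<ge>T. Xviol (avg t) \<le> \<epsilon>"
proof -
  obtain T1 where T1: "\<And>t. t \<ge> T1 \<Longrightarrow> \<epsilon> < Xviol (avg t) \<longrightarrow> \<epsilon>/2 \<le> DX t"
    using eventually_DX_large[OF assms] by (auto simp: eventually_sequentially)
  obtain t where t: "t \<ge> max T T1" "4/\<epsilon>\<^sup>2 * (\<alpha> t * DX2 t) < \<alpha> t"
    using frequently_gt_of_divergent_sum[OF \<alpha>_divergent _ summable_mult[OF \<alpha>_DX2_summable]] \<alpha>_range
    by blast
  have "\<not> \<epsilon>/2 \<le> DX t"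
  proof
    assume "\<epsilon>/2 \<le> DX t"
    then have "(\<epsilon>/2)\<^sup>2 \<le> (DX t)\<^sup>2" using assms by (intro power_mono) auto
    then have "(\<epsilon>/2)\<^sup>2 \<le> DX2 t" using DX_square_le[of t] by linarith
    then have "\<alpha> t * (\<epsilon>/2)\<^sup>2 \<le> \<alpha> t * DX2 t" using \<alpha>_range[of t] by (simp add: mult_left_mono)
    then show False using t(2) assms by (simp add: field_simps power2_eq_square)
  qed
  then show ?thesis using T1[of t] t(1) by (intro exI[of _ t]) auto
qed

text \<open>The steps are dominated by the summable decrease terms of the Lyapunov inequality.\<close>
lemma summable_avg_steps_while_violated:
  assumes "\<epsilon> > 0"
  shows "summable (\<lambda>t. if \<epsilon> < Gviol (avg t) \<and> \<epsilon> < Xviol (avg t) then \<beta> t * K + \<alpha> t * DX t else 0)"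
proof -
  obtain T1 where T1: "\<And>t. t \<ge> T1 \<Longrightarrow>
      (\<epsilon> < Gviol (avg t) \<longrightarrow> \<epsilon>/2 \<le> G t) \<and> (\<epsilon> < Xviol (avg t) \<longrightarrow> \<epsilon>/2 \<le> DX t)"
    using eventually_conj[OF eventually_G_large[OF assms] eventually_DX_large[OF assms]]
    by (auto simp: eventually_sequentially)
  show ?thesis
  proof (rule summable_comparison_test'[where N = T1])
    show "summable (\<lambda>t. 2 * K / \<epsilon> * (\<beta> t * G t) + 2 / \<epsilon> * (\<alpha> t * DX2 t))"
      by (intro summable_add summable_mult \<beta>_G_summable \<alpha>_DX2_summable)
    fix t assume "t \<ge> T1"
    have rhs_nonneg: "0 \<le> 2 * K / \<epsilon> * (\<beta> t * G t) + 2 / \<epsilon> * (\<alpha> t * DX2 t)"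
      using assms K_nonneg \<beta>_nonneg[of t] G_nonneg[of t] \<alpha>_range[of t] DX2_nonneg[of t] by simp
    show "norm (if \<epsilon> < Gviol (avg t) \<and> \<epsilon> < Xviol (avg t) then \<beta> t * K + \<alpha> t * DX t else 0)
        \<le> 2 * K / \<epsilon> * (\<beta> t * G t) + 2 / \<epsilon> * (\<alpha> t * DX2 t)"
    proof (cases "\<epsilon> < Gviol (avg t) \<and> \<epsilon> < Xviol (avg t)")
      case True
      with T1[OF \<open>t \<ge> T1\<close>] have G: "\<epsilon>/2 \<le> G t" and D: "\<epsilon>/2 \<le> DX t" by auto
      have "\<beta> t * K * \<epsilon> \<le> \<beta> t * K * (2 * G t)"
        using G \<beta>_nonneg[of t] K_nonneg by (intro mult_left_mono) auto
      then have "\<beta> t * K \<le> 2 * K / \<epsilon> * (\<beta> t * G t)" using assms by (simp add: field_simps)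
      moreover have "\<alpha> t * (DX t * \<epsilon>) \<le> \<alpha> t * (2 * DX2 t)"
      proof -
        have "DX t * \<epsilon> \<le> 2 * (DX t)\<^sup>2"
          using D DX_nonneg[of t] mult_left_mono[of \<epsilon> "2 * DX t" "DX t"] by (simp add: power2_eq_square)
        then show ?thesis using DX_square_le[of t] \<alpha>_range[of t] by (intro mult_left_mono) auto
      qed
      then have "\<alpha> t * DX t \<le> 2 / \<epsilon> * (\<alpha> t * DX2 t)" using assms by (simp add: field_simps)
      ultimately show ?thesis
        using True \<beta>_nonneg[of t] K_nonneg \<alpha>_range[of t] DX_nonneg[of t] by simp
    next
      case False
      then show ?thesis using rhs_nonneg by auto
    qed
  qed
qed

lemma frequently_violations_small:
  assumes "r > 0" shows "\<exists>t\<ge>T. Gviol (avg t) + Xviol (avg t) < r"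
proof (rule ccontr)
  assume "\<not> ?thesis"
  then have large: "\<And>t. t \<ge> T \<Longrightarrow> r \<le> Gviol (avg t) + Xviol (avg t)" by (auto simp: not_less)
  define \<epsilon> where "\<epsilon> = r/4"
  have "\<epsilon> > 0" using assms by (simp add: \<epsilon>_def)
  obtain c R where "\<And>t. norm (avg t - c) \<le> R" using avg_bounded by blast
  then have avg_in: "avg t \<in> cball c R" for t by (simp add: dist_norm norm_minus_commute)
  define A where "A = cball c R \<inter> {w. Gviol w \<le> \<epsilon> \<and> r \<le> Gviol w + Xviol w}"
  define B where "B = cball c R \<inter> {w. Xviol w \<le> \<epsilon> \<and> r \<le> Gviol w + Xviol w}"
  have sum_cont: "continuous_on UNIV (\<lambda>w. Gviol w + Xviol w)"
    by (intro continuous_on_add continuous_on_Gviol continuous_on_Xviol)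
  have "compact A" unfolding A_def
    by (intro compact_Int_closed compact_cball closed_Collect_conj closed_Collect_le
        continuous_on_Gviol sum_cont continuous_on_const)
  moreover have "closed B" unfolding B_def
    by (intro closed_Int closed_cball closed_Collect_conj closed_Collect_le
        continuous_on_Xviol sum_cont continuous_on_const)
  moreover have "A \<inter> B = {}" unfolding A_def B_def \<epsilon>_def using assms by auto
  moreover have "dist (avg (Suc t)) (avg t) \<le> \<beta> t * K + \<alpha> t * DX t" for t
    using norm_avg_step_le[of t] by (simp add: dist_norm)
  moreover have "0 \<le> (if \<epsilon> < Gviol (avg t) \<and> \<epsilon> < Xviol (avg t) then \<beta> t * K + \<alpha> t * DX t else 0)" for t
    using \<beta>_nonneg[of t] K_nonneg \<alpha>_range[of t] DX_nonneg[of t] by simp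
  moreover have "\<beta> t * K + \<alpha> t * DX t
      \<le> (if \<epsilon> < Gviol (avg t) \<and> \<epsilon> < Xviol (avg t) then \<beta> t * K + \<alpha> t * DX t else 0)"
    if "t \<ge> T" "avg t \<notin> A" "avg t \<notin> B" for t
    using that large[OF that(1)] avg_in[of t] unfolding A_def B_def by auto
  moreover have "\<exists>t\<ge>T'. avg t \<in> A" for T'
    using frequently_Gviol_le[OF \<open>\<epsilon> > 0\<close>, of "max T T'"] large avg_in unfolding A_def by force
  moreover have "\<exists>t\<ge>T'. avg t \<in> B" for T'
    using frequently_Xviol_le[OF \<open>\<epsilon> > 0\<close>, of "max T T'"] large avg_in unfolding B_def by force
  ultimately show False
    by (rule not_recurrent_in_separated_sets[OF _ _ _ _ avg_step_bound_tendsto_zero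
          summable_avg_steps_while_violated[OF \<open>\<epsilon> > 0\<close>]]) auto
qed

lemma feasible_cluster_point:
  obtains l \<sigma> where "feasible l" "filterlim \<sigma> at_top sequentially" "(\<lambda>k. avg (\<sigma> k)) \<longlonglongrightarrow> l"
proof -
  have "\<forall>k. \<exists>t\<ge>k. Gviol (avg t) + Xviol (avg t) < 1 / real (Suc k)"
    using frequently_violations_small by simp
  then obtain s where s: "\<And>k. s k \<ge> k" "\<And>k. Gviol (avg (s k)) + Xviol (avg (s k)) < 1 / real (Suc k)"
    by metis
  have "Gviol (avg (s k)) + Xviol (avg (s k)) \<le> 1 / real (Suc k)" for k
    using s(2)[of k] by simp
  then have violation_null: "(\<lambda>k. Gviol (avg (s k)) + Xviol (avg (s k))) \<longlonglongrightarrow> 0"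
    using Gviol_nonneg Xviol_nonneg
    by (intro tendsto_sandwich[OF _ _ tendsto_const LIMSEQ_inverse_real_of_nat[unfolded inverse_eq_divide]])
       (auto intro: add_nonneg_nonneg)
  obtain c R where "\<And>t. norm (avg t - c) \<le> R" using avg_bounded by blast
  then have "avg (s k) \<in> cball c R" for k by (simp add: dist_norm norm_minus_commute)
  then obtain l r where r: "strict_mono r" and "((\<lambda>k. avg (s k)) \<circ> r) \<longlonglongrightarrow> l"
    using seq_compactE[OF compact_imp_seq_compact[OF compact_cball], of "\<lambda>k. avg (s k)"] by blast
  then have lim: "(\<lambda>k. avg (s (r k))) \<longlonglongrightarrow> l" by (simp add: comp_def)
  have "(\<lambda>k. Gviol (avg (s (r k))) + Xviol (avg (s (r k)))) \<longlonglongrightarrow> Gviol l + Xviol l"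
    using continuous_on_tendsto_compose[OF continuous_on_add[OF continuous_on_Gviol continuous_on_Xviol] lim]
    by simp
  moreover have "(\<lambda>k. Gviol (avg (s (r k))) + Xviol (avg (s (r k)))) \<longlonglongrightarrow> 0"
    using LIMSEQ_subseq_LIMSEQ[OF violation_null r] by (simp add: comp_def)
  ultimately have "feasible l" using LIMSEQ_unique feasible_if_no_violation by metis
  moreover have "k \<le> s (r k)" for k using s(1)[of "r k"] seq_suble[OF r, of k] by linarith
  then have "filterlim (\<lambda>k. s (r k)) at_top sequentially"
    by (intro filterlim_at_top_mono[OF filterlim_ident] always_eventually allI)
  ultimately show thesis using that lim by blast
qed

text \<open>Along the subsequence the Lyapunov function \<open>V l\<close> tends to zero; being convergent,
  it tends to zero along the whole sequence.\<close>
lemma x_tendsto_feasible_cluster_point: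
  assumes "feasible l" and \<sigma>: "filterlim \<sigma> at_top sequentially" and lim: "(\<lambda>k. avg (\<sigma> k)) \<longlonglongrightarrow> l"
  shows "(\<lambda>t. x t i) \<longlonglongrightarrow> l"
proof -
  obtain L where L: "V l \<longlonglongrightarrow> L"
    using V_convergent_and_decrease_summable(1)[OF assms(1)] by (auto simp: convergent_def)
  have bound: "V l t \<le> (diam t + norm (avg t - l))\<^sup>2" for t
  proof -
    have "norm (x t i - l) \<le> diam t + norm (avg t - l)" for i
      using norm_avg_diff_le[of t i] norm_triangle_ineq[of "x t i - avg t" "avg t - l"]
      by (simp add: norm_minus_commute[of "x t i"])
    then have "V l t \<le> (\<Sum>i\<in>UNIV. \<pi> i * (diam t + norm (avg t - l))\<^sup>2)"
      unfolding V_def using \<pi>_nonneg by (intro sum_mono mult_left_mono power_mono) auto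
    then show ?thesis by (simp add: sum_distrib_right[symmetric] \<pi>_sum)
  qed
  have upper: "(\<lambda>k. (diam (\<sigma> k) + norm (avg (\<sigma> k) - l))\<^sup>2) \<longlonglongrightarrow> 0"
    using tendsto_power[OF tendsto_add[OF filterlim_compose[OF diam_tendsto_zero \<sigma>]
          tendsto_norm_zero[OF LIM_zero[OF lim]]], of 2] by simp
  have "(\<lambda>k. V l (\<sigma> k)) \<longlonglongrightarrow> 0"
    by (rule tendsto_sandwich[OF _ _ tendsto_const upper]) (simp_all add: V_nonneg bound)
  then have "L = 0" using LIMSEQ_unique[OF filterlim_compose[OF L \<sigma>]] by simp
  have dominated: "(norm (x t i - l))\<^sup>2 \<le> V l t / \<pi> i" for t
    using \<pi>_norm_le_V[of i t l] \<pi>_pos[of i] by (simp add: field_simps)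
  have "(\<lambda>t. (norm (x t i - l))\<^sup>2) \<longlonglongrightarrow> 0"
    by (rule tendsto_sandwich[OF _ _ tendsto_const tendsto_divide_zero[OF L[unfolded \<open>L = 0\<close>], of "\<pi> i"]])
       (simp_all add: dominated)
  then have "(\<lambda>t. norm (x t i - l)) \<longlonglongrightarrow> 0" by (rule tendsto_zero_of_power2[rotated]) simp
  then show ?thesis by (simp add: tendsto_norm_zero_iff LIM_zero_iff)
qed

theorem consensus_and_feasible_limit:
  "(\<forall>i j. (\<lambda>t. norm (x t i - x t j)) \<longlonglongrightarrow> 0) \<and> (\<exists>l. feasible l \<and> (\<forall>i. (\<lambda>t. x t i) \<longlonglongrightarrow> l))"
proof
  show "\<forall>i j. (\<lambda>t. norm (x t i - x t j)) \<longlonglongrightarrow> 0"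
  proof (intro allI)
    fix i j
    show "(\<lambda>t. norm (x t i - x t j)) \<longlonglongrightarrow> 0"
      by (rule tendsto_sandwich[OF _ _ tendsto_const diam_tendsto_zero]) (use diam_ge in auto)
  qed
  obtain l \<sigma> where l: "feasible l" and "filterlim \<sigma> at_top sequentially" "(\<lambda>k. avg (\<sigma> k)) \<longlonglongrightarrow> l"
    by (rule feasible_cluster_point)
  then show "\<exists>l. feasible l \<and> (\<forall>i. (\<lambda>t. x t i) \<longlonglongrightarrow> l)"
    using x_tendsto_feasible_cluster_point by (intro exI[of _ l] conjI allI)
qed

end

definition consensus_weights :: "('n::finite \<Rightarrow> 'n \<Rightarrow> real) \<Rightarrow> real \<Rightarrow> 'n \<Rightarrow> 'n \<Rightarrow> real" where
  "consensus_weights a h i j = (if i = j then 1 else 0) - h * laplacian a $ i $ j"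

lemma consensus_weights_eq:
  assumes "a i i = 0"
  shows "consensus_weights a h i j = h * a i j + (if i = j then 1 - h * (\<Sum>k\<in>UNIV. a i k) else 0)"
  using assms unfolding consensus_weights_def laplacian_def by (cases "i = j") simp_all

lemma h_row_sum_lt_one:
  fixes a :: "'n::finite \<Rightarrow> 'n \<Rightarrow> real"
  assumes "\<And>i j. a i j \<ge> 0" "0 < h" "h < rho a"
  shows "h * (\<Sum>k\<in>UNIV. a i k) < 1"
proof -
  define M where "M = Max (range (\<lambda>i. \<Sum>k\<in>UNIV. a i k))"
  have "h < 1 / M" using assms(3) unfolding rho_def M_def by simp
  moreover have "1 / M \<le> 0" if "M \<le> 0" using that by simp
  ultimately have "M > 0" using assms(2) by linarith
  moreover have "(\<Sum>k\<in>UNIV. a i k) \<le> M" unfolding M_def by simp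
  ultimately have "h * (\<Sum>k\<in>UNIV. a i k) \<le> h * M" "h * M < 1"
    using \<open>h < 1 / M\<close> assms(2) by (simp_all add: mult_left_mono pos_less_divide_eq mult.commute)
  then show ?thesis by linarith
qed

lemma consensus_weights_nonneg:
  assumes "\<And>j. a i j \<ge> 0" "a i i = 0" "h \<ge> 0" "h * (\<Sum>k\<in>UNIV. a i k) < 1"
  shows "consensus_weights a h i j \<ge> 0"
  using assms unfolding consensus_weights_eq[where a = a and i = i, OF assms(2)] by (cases "i = j") simp_all

lemma consensus_weights_diag_pos:
  assumes "a i i = 0" "h * (\<Sum>k\<in>UNIV. a i k) < 1"
  shows "consensus_weights a h i i > 0"
  using assms unfolding consensus_weights_eq[where a = a and i = i, OF assms(1)] by simp

lemma consensus_weights_reach: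
  assumes "strongly_connected a" "\<And>i. a i i = 0" "h > 0"
  shows "(j, i) \<in> {(u, v). consensus_weights a h v u > 0}\<^sup>*"
proof -
  have "{(u, v). a v u > 0} \<subseteq> {(u, v). consensus_weights a h v u > 0}"
    using assms(2,3) by (auto simp: consensus_weights_eq)
  then show ?thesis using rtrancl_mono assms(1) unfolding strongly_connected_def by blast
qed

lemma consensus_weights_row_sum:
  assumes "a i i = 0"
  shows "(\<Sum>j\<in>UNIV. consensus_weights a h i j) = 1"
  unfolding consensus_weights_eq[where a = a and i = i, OF assms] by (simp add: sum.distrib sum_distrib_left[symmetric])

lemma neighbour_step_eq_consensus_average:
  fixes x :: "'n::finite \<Rightarrow> 'v::real_vector"
  assumes "\<And>j. a i j \<ge> 0" "a i i = 0"
  shows "x i + h *\<^sub>R (\<Sum>j\<in>neighbours a i. a i j *\<^sub>R (x j - x i))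
    = (\<Sum>j\<in>UNIV. consensus_weights a h i j *\<^sub>R x j)"
proof -
  have "(\<Sum>j\<in>neighbours a i. a i j *\<^sub>R (x j - x i)) = (\<Sum>j\<in>UNIV. a i j *\<^sub>R (x j - x i))"
    using assms(1) by (intro sum.mono_neutral_left) (auto simp: neighbours_def not_less intro: order_antisym)
  also have "\<dots> = (\<Sum>j\<in>UNIV. a i j *\<^sub>R x j) - (\<Sum>k\<in>UNIV. a i k) *\<^sub>R x i"
    by (simp add: scaleR_diff_right sum_subtractf scaleR_sum_left)
  finally have neighbours_sum: "h *\<^sub>R (\<Sum>j\<in>neighbours a i. a i j *\<^sub>R (x j - x i))
      = h *\<^sub>R (\<Sum>j\<in>UNIV. a i j *\<^sub>R x j) - (h * (\<Sum>k\<in>UNIV. a i k)) *\<^sub>R x i"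
    by (simp add: scaleR_diff_right)
  have weights_sum: "(\<Sum>j\<in>UNIV. consensus_weights a h i j *\<^sub>R x j)
      = h *\<^sub>R (\<Sum>j\<in>UNIV. a i j *\<^sub>R x j) + (1 - h * (\<Sum>k\<in>UNIV. a i k)) *\<^sub>R x i"
    unfolding consensus_weights_eq[where a = a and i = i, OF assms(2)]
    by (simp add: scaleR_add_left sum.distrib scaleR_sum_right if_distrib[of "\<lambda>c. c *\<^sub>R _"] cong: if_cong)
  show ?thesis unfolding neighbours_sum weights_sum by (simp add: algebra_simps)
qed

theorem theorem5:
  fixes a :: "'n::finite \<Rightarrow> 'n \<Rightarrow> real"
    and g :: "'n \<Rightarrow> real^'m \<Rightarrow> real"
    and dg :: "'n \<Rightarrow> real^'m \<Rightarrow> real^'m"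
    and X :: "'n \<Rightarrow> (real^'m) set"
    and K h :: real
    and \<alpha> \<beta> :: "nat \<Rightarrow> real"
    and x :: "nat \<Rightarrow> 'n \<Rightarrow> real^'m"
  assumes n2: "CARD('n) \<ge> 2"
    and a_nonneg: "\<forall>i j. a i j \<ge> 0"
    and a_noloop: "\<forall>i. a i i = 0"
    and sc: "strongly_connected a"
    and g_convex: "\<forall>i. convex_on UNIV (g i)"
    and g_cont: "\<forall>i. continuous_on UNIV (g i)"
    and X_closed: "\<forall>i. closed (X i)"
    and X_convex: "\<forall>i. convex (X i)"
    and dg_choice: "\<forall>i. plus_subgrad_choice (g i) (dg i)"
    and nonempty: "cfp_solutions g X \<noteq> {}"
    and K: "K \<ge> 0" "\<forall>i y. norm (dg i y) \<le> K"
    and alpha: "\<forall>t. 0 \<le> \<alpha> t \<and> \<alpha> t \<le> 1"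
      "filterlim (\<lambda>N. \<Sum>t<N. \<alpha> t) at_top sequentially"
      "summable (\<lambda>t. (\<alpha> t)\<^sup>2)"
    and beta: "\<forall>t. 0 \<le> \<beta> t"
      "filterlim (\<lambda>N. \<Sum>t<N. \<beta> t) at_top sequentially"
      "summable (\<lambda>t. (\<beta> t)\<^sup>2)"
    and h: "0 < h" "h < rho a"
    and dyn: "\<forall>t i.
      (let y = x t i + h *\<^sub>R (\<Sum>j\<in>neighbours a i. a i j *\<^sub>R (x t j - x t i));
           nab = \<beta> t *\<^sub>R dg i y;
           \<xi> = y - nab;
           \<phi>' = \<alpha> t *\<^sub>R (\<xi> - closest_point (X i) \<xi>);
           \<phi> = - nab - \<phi>';
           u = h *\<^sub>R (\<Sum>j\<in>neighbours a i. a i j *\<^sub>R (x t j - x t i)) + \<phi>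
       in x (Suc t) i = x t i + u)"
  shows "(\<forall>i j. (\<lambda>t. norm (x t i - x t j)) \<longlonglongrightarrow> 0)
         \<and> (\<exists>xs\<in>cfp_solutions g X. \<forall>i. (\<lambda>t. x t i) \<longlonglongrightarrow> xs)"
proof -
  define W where "W = consensus_weights a h"
  define y where "y t i = (\<Sum>j\<in>UNIV. W i j *\<^sub>R x t j)" for t i
  have row_sum_bound: "h * (\<Sum>k\<in>UNIV. a i k) < 1" for i
    using h_row_sum_lt_one[of a h i] a_nonneg h by simp
  have step: "x (Suc t) i = (1 - \<alpha> t) *\<^sub>R (y t i - \<beta> t *\<^sub>R dg i (y t i))
      + \<alpha> t *\<^sub>R closest_point (X i) (y t i - \<beta> t *\<^sub>R dg i (y t i))" for t i
  proof -
    have "h *\<^sub>R (\<Sum>j\<in>neighbours a i. a i j *\<^sub>R (x t j - x t i)) = y t i - x t i"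
      using neighbour_step_eq_consensus_average[of a i "x t" h] a_nonneg a_noloop
      unfolding y_def W_def by (simp add: algebra_simps)
    then show ?thesis using dyn[rule_format, of t i] unfolding Let_def by (simp add: algebra_simps)
  qed
  have W: "W i j \<ge> 0" "W i i > 0" "(\<Sum>j\<in>UNIV. W i j) = 1" "(j, i) \<in> {(u, v). W v u > 0}\<^sup>*" for i j
    unfolding W_def using a_nonneg a_noloop h(1) row_sum_bound[of i]
    by (simp_all add: consensus_weights_nonneg consensus_weights_diag_pos consensus_weights_row_sum
        consensus_weights_reach[OF sc])
  interpret consensus_projection_scheme W g dg X K \<alpha> \<beta> x y
    using W g_cont X_closed X_convex dg_choice K alpha beta nonempty step
    by unfold_locales (auto simp: y_def plus_subgrad_choice_def cfp_solutions_def)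
  show ?thesis
    using consensus_and_feasible_limit unfolding feasible_def cfp_solutions_def by blast
qed

end
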